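(* Let $G$ be a vertex-transitive graph on $n \ge 3$ vertices whose automorphism group is abelian. Then $\frac{\lambda_3(G)}{n} \le \frac13$.
   Context: $\lambda_3(G)$ denotes the third largest eigenvalue (with multiplicity) of the adjacency matrix of $G$. *)

theory Defs
  imports "Jordan_Normal_Form.Char_Poly" "HOL-Combinatorics.Permutations"
begin

text \<open>A finite simple graph on the vertex set {0..<n}, given by an edge relation E
  (only its values on {0..<n} matter).\<close>
definition simple_graph :: "nat \<Rightarrow> (nat \<Rightarrow> nat \<Rightarrow> bool) \<Rightarrow> bool" where
  "simple_graph n E \<longleftrightarrow> (\<forall>x<n. \<forall>y<n. E x y \<longleftrightarrow> E y x) \<and> (\<forall>x<n. \<not> E x x)"

definition graph_automorphisms :: "nat \<Rightarrow> (nat \<Rightarrow> nat \<Rightarrow> bool) \<Rightarrow> (nat \<Rightarrow> nat) set" where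
  "graph_automorphisms n E =
     {\<sigma>. \<sigma> permutes {..<n} \<and> (\<forall>x<n. \<forall>y<n. E (\<sigma> x) (\<sigma> y) \<longleftrightarrow> E x y)}"

definition vertex_transitive :: "nat \<Rightarrow> (nat \<Rightarrow> nat \<Rightarrow> bool) \<Rightarrow> bool" where
  "vertex_transitive n E \<longleftrightarrow> (\<forall>x<n. \<forall>y<n. \<exists>\<sigma>\<in>graph_automorphisms n E. \<sigma> x = y)"

definition abelian_automorphism_group :: "nat \<Rightarrow> (nat \<Rightarrow> nat \<Rightarrow> bool) \<Rightarrow> bool" where
  "abelian_automorphism_group n E \<longleftrightarrow>
     (\<forall>\<sigma>\<in>graph_automorphisms n E. \<forall>\<tau>\<in>graph_automorphisms n E. \<sigma> \<circ> \<tau> = \<tau> \<circ> \<sigma>)"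

definition adjacency_matrix :: "nat \<Rightarrow> (nat \<Rightarrow> nat \<Rightarrow> bool) \<Rightarrow> real mat" where
  "adjacency_matrix n E = mat n n (\<lambda>(i, j). if E i j then 1 else 0)"

text \<open>Eigenvalues with (algebraic) multiplicity, sorted non-increasingly. The adjacency
  matrix is real symmetric, so its characteristic polynomial splits over the reals.\<close>
definition adj_eigenvalues_desc :: "nat \<Rightarrow> (nat \<Rightarrow> nat \<Rightarrow> bool) \<Rightarrow> real list" where
  "adj_eigenvalues_desc n E =
     rev (sorted_list_of_multiset (proots (char_poly (adjacency_matrix n E))))"

definition adj_lambda :: "nat \<Rightarrow> nat \<Rightarrow> (nat \<Rightarrow> nat \<Rightarrow> bool) \<Rightarrow> real" where
  "adj_lambda k n E = adj_eigenvalues_desc n E ! (k - 1)"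

end

theory Submission
  imports Defs
begin

(* An abelian transitive automorphism group acts regularly, so the vertices form an abelian
   group and the graph is a Cayley graph of it. Inversion is then an automorphism; commuting
   with all translations, it must be trivial, so the group is an elementary abelian 2-group.
   Its n characters are (+1/-1)-valued and are eigenvectors of the adjacency matrix, with
   eigenvalue mu(chi), the sum of chi over the neighbours of 0. For distinct nontrivial
   chi, psi one has chi + psi <= (1 + chi)(1 + psi)/2 pointwise, and orthogonality turns this
   into mu(chi) + mu(psi) <= n/2. Two of the three largest eigenvalues come from nontrivial
   characters, hence even lambda_3 <= n/4. *)

lemma mat_mult_mat_index:
  assumes "i < n" "j < n"
  shows "(mat n n f * mat n n g) $$ (i, j) = (\<Sum>k<n. f (i, k) * g (k, j))"
  using assms by (simp add: scalar_prod_def lessThan_atLeast0)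

lemma char_poly_eq_diag:
  fixes A :: "'a :: field mat"
  assumes A: "A \<in> carrier_mat n n" and H: "H \<in> carrier_mat n n" and Q: "Q \<in> carrier_mat n n"
    and QH: "Q * H = 1\<^sub>m n" and AH: "A * H = H * mat_diag n f"
  shows "char_poly A = (\<Prod>a \<leftarrow> map f [0..<n]. [:- a, 1:])"
proof -
  have HQ: "H * Q = 1\<^sub>m n" using mat_mult_left_right_inverse[OF Q H QH] .
  have "A = A * (H * Q)" using A HQ by simp
  also have "\<dots> = H * mat_diag n f * Q" using A H Q AH by (simp flip: assoc_mult_mat)
  finally have "similar_mat A (mat_diag n f)"
    using A H Q HQ QH by (intro similar_matI) auto
  then have "char_poly A = char_poly (mat_diag n f)" by (rule char_poly_similar)
  also have "\<dots> = (\<Prod>a \<leftarrow> diag_mat (mat_diag n f). [:- a, 1:])"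
    by (rule char_poly_upper_triangular) (auto simp: upper_triangular_def mat_diag_def)
  also have "diag_mat (mat_diag n f) = map f [0..<n]"
    by (simp add: diag_mat_def mat_diag_def)
  finally show ?thesis .
qed

lemma proots_prod_linear: "proots (\<Prod>a \<leftarrow> xs. [:- a, 1:]) = mset xs"
proof -
  have "0 \<notin> set (map (\<lambda>a. [:- a, 1:]) xs)" by auto
  then show ?thesis using proots_prod_list by (fastforce simp: comp_def)
qed

lemma length_filter_ge_nth_rev_sort:
  fixes xs :: "'a :: linorder list"
  assumes "k < length xs"
  shows "Suc k \<le> length (filter (\<lambda>v. rev (sort xs) ! k \<le> v) xs)"
proof -
  let ?ys = "rev (sort xs)" and ?P = "\<lambda>v. rev (sort xs) ! k \<le> v"
  have "\<forall>v \<in> set (take (Suc k) ?ys). ?P v"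
  proof
    fix v assume "v \<in> set (take (Suc k) ?ys)"
    then obtain i where "i < length (take (Suc k) ?ys)" "v = take (Suc k) ?ys ! i"
      by (metis in_set_conv_nth)
    then have "i \<le> k" "v = ?ys ! i" by auto
    then show "?P v"
      using assms sorted_rev_nth_mono[of ?ys i k] by simp
  qed
  then have "Suc k = length (filter ?P (take (Suc k) ?ys))"
    using assms by simp
  also have "\<dots> \<le> length (filter ?P ?ys)"
    by (metis append_take_drop_id filter_append le_add1 length_append)
  also have "\<dots> = length (filter ?P xs)"
    by (metis length_rev length_sort rev_filter filter_sort)
  finally show ?thesis .
qed

locale boolean_group =
  fixes n :: nat and add :: "nat \<Rightarrow> nat \<Rightarrow> nat" (infixl "\<star>" 65)
  assumes n_pos: "0 < n"
    and add_closed: "x < n \<Longrightarrow> y < n \<Longrightarrow> x \<star> y < n"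
    and zero_add: "x < n \<Longrightarrow> 0 \<star> x = x"
    and add_self: "x < n \<Longrightarrow> x \<star> x = 0"
    and add_commute: "x < n \<Longrightarrow> y < n \<Longrightarrow> x \<star> y = y \<star> x"
    and add_assoc: "x < n \<Longrightarrow> y < n \<Longrightarrow> z < n \<Longrightarrow> x \<star> y \<star> z = x \<star> (y \<star> z)"
begin

lemma add_zero: "x < n \<Longrightarrow> x \<star> 0 = x"
  by (metis add_commute n_pos zero_add)

lemma add_left_commute: "x < n \<Longrightarrow> y < n \<Longrightarrow> z < n \<Longrightarrow> x \<star> (y \<star> z) = y \<star> (x \<star> z)"
  by (metis add_assoc add_commute)

lemma add_cancel_left: "x < n \<Longrightarrow> y < n \<Longrightarrow> x \<star> (x \<star> y) = y"
  by (metis add_assoc add_self zero_add)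

lemma add_add_cancel: "a < n \<Longrightarrow> x < n \<Longrightarrow> y < n \<Longrightarrow> (a \<star> x) \<star> (a \<star> y) = x \<star> y"
  by (metis add_assoc add_cancel_left add_closed add_left_commute)

lemma sum_translate:
  assumes "a < n"
  shows "(\<Sum>x<n. f (a \<star> x)) = (\<Sum>x<n. f x)"
  by (rule sum.reindex_bij_witness[where i = "(\<star>) a" and j = "(\<star>) a"])
    (auto simp: assms add_cancel_left add_closed)

lemma sum_eq_0_if_translate_neg:
  assumes "a < n" and "\<And>x. x < n \<Longrightarrow> f (a \<star> x) = - f x"
  shows "(\<Sum>x<n. f x) = (0 :: real)"
proof -
  have "(\<Sum>x<n. f x) = (\<Sum>x<n. f (a \<star> x))" using sum_translate[OF assms(1), of f] by simp
  also have "\<dots> = - (\<Sum>x<n. f x)" using assms(2) by (simp add: sum_negf)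
  finally show ?thesis by simp
qed

definition subgroup :: "nat set \<Rightarrow> bool" where
  "subgroup K \<longleftrightarrow> K \<subseteq> {..<n} \<and> 0 \<in> K \<and> (\<forall>x\<in>K. \<forall>y\<in>K. x \<star> y \<in> K)"

(* Characters are extended by 0 outside K, so that they are determined by their values on K. *)
definition characters :: "nat set \<Rightarrow> (nat \<Rightarrow> real) set" where
  "characters K = {\<chi>. (\<forall>x\<in>K. \<chi> x = 1 \<or> \<chi> x = -1) \<and> (\<forall>x\<in>K. \<forall>y\<in>K. \<chi> (x \<star> y) = \<chi> x * \<chi> y)
     \<and> (\<forall>x. x \<notin> K \<longrightarrow> \<chi> x = 0)}"

lemma characters_zero:
  assumes "\<chi> \<in> characters K" "0 \<in> K"
  shows "\<chi> 0 = 1"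
proof -
  have "\<chi> 0 = \<chi> 0 * \<chi> 0" "\<chi> 0 = 1 \<or> \<chi> 0 = -1"
    using assms zero_add[OF n_pos] unfolding characters_def by force+
  then show ?thesis by auto
qed

lemma characters_eqI:
  assumes "\<chi> \<in> characters K" "\<psi> \<in> characters K" "\<And>x. x \<in> K \<Longrightarrow> \<chi> x = \<psi> x"
  shows "\<chi> = \<psi>"
proof
  fix x show "\<chi> x = \<psi> x" using assms unfolding characters_def by (cases "x \<in> K") auto
qed

lemma translate_image_iff:
  assumes "a < n" "K \<subseteq> {..<n}"
  shows "x \<in> (\<star>) a ` K \<longleftrightarrow> x < n \<and> a \<star> x \<in> K"
  using assms by (force simp: add_cancel_left add_closed)

lemma subgroup_extend:
  assumes K: "subgroup K" and a: "a < n" "a \<notin> K"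
  shows "subgroup (K \<union> (\<star>) a ` K)" and "card (K \<union> (\<star>) a ` K) = 2 * card K"
proof -
  have less: "K \<subseteq> {..<n}" using K unfolding subgroup_def by auto
  have closed: "x \<in> K \<Longrightarrow> y \<in> K \<Longrightarrow> x \<star> y \<in> K" for x y using K unfolding subgroup_def by auto
  have "x \<star> y \<in> K \<union> (\<star>) a ` K" if members: "x \<in> K \<union> (\<star>) a ` K" "y \<in> K \<union> (\<star>) a ` K" for x y
  proof -
    have xy: "x < n" "y < n" using members less translate_image_iff[OF a(1) less] by auto
    have image_iff: "z \<in> (\<star>) a ` K \<longleftrightarrow> z < n \<and> a \<star> z \<in> K" for z
      using translate_image_iff[OF a(1) less] .
    consider "x \<in> K" "y \<in> K" | "x \<in> K" "a \<star> y \<in> K" | "a \<star> x \<in> K" "y \<in> K"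
      | "a \<star> x \<in> K" "a \<star> y \<in> K"
      using members image_iff by auto
    then show ?thesis
    proof cases
      case 2
      then have "a \<star> (x \<star> y) \<in> K" using closed[of x "a \<star> y"] xy a(1) by (simp add: add_left_commute)
      then show ?thesis using image_iff xy add_closed by auto
    next
      case 3
      then have "a \<star> (x \<star> y) \<in> K" using closed[of "a \<star> x" y] xy a(1) by (simp add: add_assoc)
      then show ?thesis using image_iff xy add_closed by auto
    next
      case 4
      then show ?thesis using closed add_add_cancel[OF a(1) xy] by fastforce
    qed (use closed in auto)
  qed
  then show "subgroup (K \<union> (\<star>) a ` K)"
    using K a less add_closed unfolding subgroup_def by auto
  have "a \<star> k \<notin> K" if "k \<in> K" for k
    using closed[of "a \<star> k" k] that a less by (auto simp: add_assoc add_self add_zero)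
  then have disjoint: "K \<inter> (\<star>) a ` K = {}" by auto
  have "inj_on ((\<star>) a) K" using less by (intro inj_onI) (metis a(1) add_cancel_left lessThan_iff subsetD)
  moreover have "finite K" using less finite_subset by blast
  ultimately show "card (K \<union> (\<star>) a ` K) = 2 * card K"
    using disjoint by (simp add: card_Un_disjoint card_image)
qed

definition extend_character :: "nat set \<Rightarrow> nat \<Rightarrow> (nat \<Rightarrow> real) \<Rightarrow> real \<Rightarrow> nat \<Rightarrow> real" where
  "extend_character K a \<chi> e x =
     (if x \<in> K then \<chi> x else if x \<in> (\<star>) a ` K then e * \<chi> (a \<star> x) else 0)"

lemma characters_extend:
  assumes K: "subgroup K" and a: "a < n" "a \<notin> K"
    and \<chi>: "\<chi> \<in> characters K" and e: "e = 1 \<or> e = -1"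
  shows "extend_character K a \<chi> e \<in> characters (K \<union> (\<star>) a ` K)" (is "?\<chi>' \<in> _")
proof -
  have less: "K \<subseteq> {..<n}" using K unfolding subgroup_def by auto
  have closed: "x \<in> K \<Longrightarrow> y \<in> K \<Longrightarrow> x \<star> y \<in> K" for x y using K unfolding subgroup_def by auto
  have sign: "x \<in> K \<Longrightarrow> \<chi> x = 1 \<or> \<chi> x = -1" for x using \<chi> unfolding characters_def by auto
  have hom: "x \<in> K \<Longrightarrow> y \<in> K \<Longrightarrow> \<chi> (x \<star> y) = \<chi> x * \<chi> y" for x y
    using \<chi> unfolding characters_def by auto
  have image_iff: "z \<in> (\<star>) a ` K \<longleftrightarrow> z < n \<and> a \<star> z \<in> K" for z
    using translate_image_iff[OF a(1) less] .
  have on_K: "x \<in> K \<Longrightarrow> ?\<chi>' x = \<chi> x" for x by (simp add: extend_character_def)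
  have on_coset: "a \<star> x \<in> K \<Longrightarrow> x < n \<Longrightarrow> ?\<chi>' x = e * \<chi> (a \<star> x)" for x
    using image_iff closed a unfolding extend_character_def by (metis add_assoc add_self zero_add)
  have "?\<chi>' (x \<star> y) = ?\<chi>' x * ?\<chi>' y"
    if members: "x \<in> K \<union> (\<star>) a ` K" "y \<in> K \<union> (\<star>) a ` K" for x y
  proof -
    have xy: "x < n" "y < n" using members less image_iff by auto
    consider "x \<in> K" "y \<in> K" | "x \<in> K" "a \<star> y \<in> K" | "a \<star> x \<in> K" "y \<in> K"
      | "a \<star> x \<in> K" "a \<star> y \<in> K"
      using members image_iff by auto
    then show ?thesis
    proof cases
      case 1
      then show ?thesis using closed hom on_K by simp
    next
      case 2
      moreover have "a \<star> (x \<star> y) = x \<star> (a \<star> y)" using xy a(1) by (simp add: add_left_commute)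
      ultimately show ?thesis
        using on_K on_coset closed hom xy add_closed by (simp add: mult.left_commute)
    next
      case 3
      moreover have "a \<star> (x \<star> y) = (a \<star> x) \<star> y" using xy a(1) by (simp add: add_assoc)
      ultimately show ?thesis
        using on_K on_coset closed hom xy add_closed by (simp add: mult.assoc)
    next
      case 4
      have "?\<chi>' (x \<star> y) = \<chi> ((a \<star> x) \<star> (a \<star> y))"
        using on_K closed[OF 4] add_add_cancel[OF a(1) xy] by simp
      also have "\<dots> = (e * \<chi> (a \<star> x)) * (e * \<chi> (a \<star> y))"
        using hom[OF 4] e by auto
      also have "\<dots> = ?\<chi>' x * ?\<chi>' y" using on_coset 4 xy by simp
      finally show ?thesis .
    qed
  qed
  moreover have "?\<chi>' x = 1 \<or> ?\<chi>' x = -1" if "x \<in> K \<union> (\<star>) a ` K" for x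
    using that e image_iff by (auto dest: sign simp: extend_character_def)
  moreover have "?\<chi>' x = 0" if "x \<notin> K \<union> (\<star>) a ` K" for x
    using that by (simp add: extend_character_def)
  ultimately show ?thesis unfolding characters_def by blast
qed

lemma characters_double:
  assumes K: "subgroup K" and a: "a < n" "a \<notin> K"
    and C: "finite C" "C \<subseteq> characters K" "card C = card K"
  shows "\<exists>C'. finite C' \<and> C' \<subseteq> characters (K \<union> (\<star>) a ` K) \<and> card C' = card (K \<union> (\<star>) a ` K)"
proof -
  define extend where "extend = (\<lambda>(\<chi>, e). extend_character K a \<chi> e)"
  have zero: "0 \<in> K" using K unfolding subgroup_def by auto
  have extend_a: "extend (\<chi>, e) a = e" if "\<chi> \<in> C" for \<chi> e
  proof -
    have "a \<in> (\<star>) a ` K" using add_zero[OF a(1)] by (intro rev_image_eqI[OF zero]) simp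
    moreover have "\<chi> 0 = 1" using that C(2) characters_zero zero by blast
    ultimately show ?thesis using a by (simp add: extend_def extend_character_def add_self)
  qed
  have "inj_on extend (C \<times> {1, -1})"
  proof (rule inj_onI, clarify)
    fix \<chi> e \<psi> f assume "\<chi> \<in> C" "\<psi> \<in> C" and eq: "extend (\<chi>, e) = extend (\<psi>, f)"
    moreover have "\<chi> x = \<psi> x" if "x \<in> K" for x
      using fun_cong[OF eq, of x] that by (simp add: extend_def extend_character_def)
    ultimately have "\<chi> = \<psi>" using C(2) by (intro characters_eqI[of \<chi> K \<psi>]) auto
    moreover have "e = f"
      using eq extend_a[OF \<open>\<chi> \<in> C\<close>, of e] extend_a[OF \<open>\<psi> \<in> C\<close>, of f] by simp
    ultimately show "\<chi> = \<psi> \<and> e = f" by simp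
  qed
  then have "card (extend ` (C \<times> {1, -1})) = card (K \<union> (\<star>) a ` K)"
    using C subgroup_extend(2)[OF K a] by (simp add: card_image card_cartesian_product)
  moreover have "extend (\<chi>, e) \<in> characters (K \<union> (\<star>) a ` K)" if "\<chi> \<in> C" "e \<in> {1, -1}" for \<chi> e
  proof -
    have "\<chi> \<in> characters K" "e = 1 \<or> e = -1" using that C(2) by auto
    from characters_extend[OF K a this] show ?thesis by (simp add: extend_def)
  qed
  then have "extend ` (C \<times> {1, -1}) \<subseteq> characters (K \<union> (\<star>) a ` K)" by auto
  moreover have "finite (extend ` (C \<times> {1, -1}))" using C(1) by simp
  ultimately show ?thesis by (intro exI[of _ "extend ` (C \<times> {1, -1})"]) simp
qed

lemma characters_exist: "\<exists>C. finite C \<and> C \<subseteq> characters {..<n} \<and> card C = n"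
proof -
  have grow: "\<exists>C. finite C \<and> C \<subseteq> characters {..<n} \<and> card C = n"
    if "subgroup K" "finite C" "C \<subseteq> characters K" "card C = card K" for K C
    using that
  proof (induction "n - card K" arbitrary: K C rule: less_induct)
    case less
    show ?case
    proof (cases "K = {..<n}")
      case True
      then show ?thesis using less.prems by auto
    next
      case False
      then obtain a where a: "a < n" "a \<notin> K" using less.prems(1) unfolding subgroup_def by auto
      let ?K' = "K \<union> (\<star>) a ` K"
      obtain C' where C': "finite C'" "C' \<subseteq> characters ?K'" "card C' = card ?K'"
        using characters_double[OF less.prems(1) a less.prems(2-4)] by blast
      have "finite K" "0 \<in> K" using less.prems(1) finite_subset unfolding subgroup_def by auto
      then have "0 < card K" by (auto simp: card_gt_0_iff)
      moreover have "card ?K' \<le> n"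
        using subgroup_extend(1)[OF less.prems(1) a] card_mono[of "{..<n}" ?K']
        unfolding subgroup_def by auto
      ultimately have "n - card ?K' < n - card K" using subgroup_extend(2)[OF less.prems(1) a] by linarith
      from less.hyps[OF this subgroup_extend(1)[OF less.prems(1) a] C'] show ?thesis .
    qed
  qed
  have "subgroup {0}" using n_pos zero_add unfolding subgroup_def by auto
  moreover have "(\<lambda>x. if x = 0 then 1 else 0) \<in> characters {0}"
    using n_pos zero_add unfolding characters_def by auto
  ultimately show ?thesis using grow[of "{0}" "{\<lambda>x. if x = 0 then 1 else 0}"] by simp
qed

definition trivial_character :: "nat \<Rightarrow> real" where
  "trivial_character x = (if x < n then 1 else 0)"

lemma trivial_character_in_characters: "trivial_character \<in> characters {..<n}"
  unfolding characters_def trivial_character_def by (auto simp: add_closed)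

lemma characters_mult:
  assumes "\<chi> \<in> characters K" "\<psi> \<in> characters K"
  shows "(\<lambda>x. \<chi> x * \<psi> x) \<in> characters K"
proof -
  have "\<chi> x * \<psi> x = 1 \<or> \<chi> x * \<psi> x = -1" if "x \<in> K" for x
  proof -
    have "\<chi> x = 1 \<or> \<chi> x = -1" "\<psi> x = 1 \<or> \<psi> x = -1"
      using assms that unfolding characters_def by auto
    then show ?thesis by auto
  qed
  then show ?thesis using assms unfolding characters_def by (auto simp: mult_ac)
qed

lemma sum_character:
  assumes \<chi>: "\<chi> \<in> characters {..<n}" and nontrivial: "\<chi> \<noteq> trivial_character"
  shows "(\<Sum>x<n. \<chi> x) = 0"
proof -
  obtain a where a: "a < n" "\<chi> a \<noteq> 1"
    using characters_eqI[OF \<chi> trivial_character_in_characters] nontrivial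
    by (auto simp: trivial_character_def)
  then have "\<chi> a = -1" using \<chi> unfolding characters_def by auto
  moreover have "\<chi> (a \<star> x) = \<chi> a * \<chi> x" if "x < n" for x
    using \<chi> a(1) that unfolding characters_def by blast
  ultimately have "\<chi> (a \<star> x) = - \<chi> x" if "x < n" for x using that by simp
  then show ?thesis by (rule sum_eq_0_if_translate_neg[OF a(1)])
qed

lemma characters_orthogonal:
  assumes \<chi>: "\<chi> \<in> characters {..<n}" and \<psi>: "\<psi> \<in> characters {..<n}"
  shows "(\<Sum>x<n. \<chi> x * \<psi> x) = (if \<chi> = \<psi> then n else 0)"
proof (cases "\<chi> = \<psi>")
  case True
  have "\<chi> x * \<chi> x = 1" if "x < n" for x using \<chi> that unfolding characters_def by force
  then have "(\<Sum>x<n. \<chi> x * \<psi> x) = (\<Sum>x<n. 1)" using True by (intro sum.cong) auto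
  then show ?thesis using True by simp
next
  case False
  then obtain a where a: "a < n" "\<chi> a \<noteq> \<psi> a" using characters_eqI[OF \<chi> \<psi>] by auto
  moreover have "\<chi> a = 1 \<or> \<chi> a = -1" "\<psi> a = 1 \<or> \<psi> a = -1"
    using \<chi> \<psi> a(1) unfolding characters_def by auto
  ultimately have "\<chi> a * \<psi> a = -1" by auto
  then have "(\<lambda>x. \<chi> x * \<psi> x) \<noteq> trivial_character"
    using a(1) by (auto dest: fun_cong[of _ _ a] simp: trivial_character_def)
  then show ?thesis using sum_character[OF characters_mult[OF \<chi> \<psi>]] False by simp
qed

end

locale boolean_cayley_graph = boolean_group +
  fixes E :: "nat \<Rightarrow> nat \<Rightarrow> bool"
  assumes adjacent_translate: "x < n \<Longrightarrow> y < n \<Longrightarrow> E x y = E 0 (x \<star> y)"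
begin

definition character_eigenvalue :: "(nat \<Rightarrow> real) \<Rightarrow> real" where
  "character_eigenvalue \<chi> = (\<Sum>s<n. if E 0 s then \<chi> s else 0)"

lemma adjacency_character_eigenvector:
  assumes \<chi>: "\<chi> \<in> characters {..<n}" and x: "x < n"
  shows "(\<Sum>y<n. (if E x y then 1 else 0) * \<chi> y) = \<chi> x * character_eigenvalue \<chi>"
proof -
  have hom: "\<chi> (x \<star> s) = \<chi> x * \<chi> s" if "s < n" for s
    using \<chi> x that unfolding characters_def by simp
  have adjacent: "E x (x \<star> s) = E 0 s" if "s < n" for s
    using adjacent_translate[OF x add_closed[OF x that]] add_cancel_left[OF x that] by simp
  have "(\<Sum>y<n. (if E x y then 1 else 0) * \<chi> y)
      = (\<Sum>s<n. (if E x (x \<star> s) then 1 else 0) * \<chi> (x \<star> s))"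
    using sum_translate[OF x, of "\<lambda>y. (if E x y then 1 else 0) * \<chi> y"] by simp
  also have "\<dots> = (\<Sum>s<n. \<chi> x * (if E 0 s then \<chi> s else 0))"
    by (intro sum.cong refl) (simp add: adjacent hom)
  also have "\<dots> = \<chi> x * character_eigenvalue \<chi>"
    by (simp add: character_eigenvalue_def sum_distrib_left)
  finally show ?thesis .
qed

lemma char_poly_adjacency_matrix:
  fixes cs :: "(nat \<Rightarrow> real) list"
  assumes cs: "distinct cs" "set cs \<subseteq> characters {..<n}" "length cs = n"
  shows "char_poly (adjacency_matrix n E) = (\<Prod>a \<leftarrow> map character_eigenvalue cs. [:- a, 1:])"
proof -
  define H where "H = mat n n (\<lambda>(x, j). (cs ! j) x)"
  define Q where "Q = mat n n (\<lambda>(j, x). (cs ! j) x / n)"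
  have chars: "j < n \<Longrightarrow> cs ! j \<in> characters {..<n}" for j using cs nth_mem by auto
  have H: "H \<in> carrier_mat n n" unfolding H_def by simp
  have "Q * H = 1\<^sub>m n"
  proof (rule eq_matI)
    fix i j assume "i < dim_row (1\<^sub>m n)" "j < dim_col (1\<^sub>m n)"
    then have ij: "i < n" "j < n" by auto
    have "(Q * H) $$ (i, j) = (\<Sum>x<n. (cs ! i) x * (cs ! j) x) / n"
      unfolding Q_def H_def mat_mult_mat_index[OF ij] by (simp add: sum_divide_distrib)
    also have "\<dots> = 1\<^sub>m n $$ (i, j)"
      using characters_orthogonal[OF chars chars] ij nth_eq_iff_index_eq[OF cs(1)] cs(3) n_pos
      by auto
    finally show "(Q * H) $$ (i, j) = 1\<^sub>m n $$ (i, j)" .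
  qed (auto simp: Q_def H_def)
  moreover have "adjacency_matrix n E * H = H * mat_diag n (\<lambda>j. character_eigenvalue (cs ! j))"
  proof (rule eq_matI)
    fix x j assume "x < dim_row (H * mat_diag n (\<lambda>j. character_eigenvalue (cs ! j)))"
      "j < dim_col (H * mat_diag n (\<lambda>j. character_eigenvalue (cs ! j)))"
    then have xj: "x < n" "j < n" using H by (auto simp: mat_diag_def)
    have "(adjacency_matrix n E * H) $$ (x, j) = (\<Sum>y<n. (if E x y then 1 else 0) * (cs ! j) y)"
      unfolding adjacency_matrix_def H_def mat_mult_mat_index[OF xj] by simp
    also have "\<dots> = (cs ! j) x * character_eigenvalue (cs ! j)"
      using adjacency_character_eigenvector[OF chars xj(1)] xj(2) .
    also have "\<dots> = (H * mat_diag n (\<lambda>j. character_eigenvalue (cs ! j))) $$ (x, j)"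
      unfolding mat_diag_mult_right[OF H] using xj by (simp add: H_def)
    finally show "(adjacency_matrix n E * H) $$ (x, j)
      = (H * mat_diag n (\<lambda>j. character_eigenvalue (cs ! j))) $$ (x, j)" .
  qed (auto simp: adjacency_matrix_def H_def mat_diag_def)
  ultimately have "char_poly (adjacency_matrix n E)
      = (\<Prod>a \<leftarrow> map (\<lambda>j. character_eigenvalue (cs ! j)) [0..<n]. [:- a, 1:])"
    by (intro char_poly_eq_diag[OF _ H]) (auto simp: adjacency_matrix_def Q_def)
  also have "map (\<lambda>j. character_eigenvalue (cs ! j)) [0..<n] = map character_eigenvalue cs"
    using cs(3) by (simp add: list_eq_iff_nth_eq)
  finally show ?thesis .
qed

lemma character_eigenvalue_add_le:
  assumes \<chi>: "\<chi> \<in> characters {..<n}" and \<psi>: "\<psi> \<in> characters {..<n}" and "\<chi> \<noteq> \<psi>"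
    and "\<chi> \<noteq> trivial_character" "\<psi> \<noteq> trivial_character"
  shows "character_eigenvalue \<chi> + character_eigenvalue \<psi> \<le> n / 2"
proof -
  have "character_eigenvalue \<chi> + character_eigenvalue \<psi> = (\<Sum>s<n. if E 0 s then \<chi> s + \<psi> s else 0)"
    unfolding character_eigenvalue_def by (simp flip: sum.distrib) (intro sum.cong, auto)
  also have "\<dots> \<le> (\<Sum>s<n. (1 + \<chi> s) * (1 + \<psi> s) / 2)"
  proof (rule sum_mono)
    fix s assume "s \<in> {..<n}"
    then have "\<chi> s = 1 \<or> \<chi> s = -1" "\<psi> s = 1 \<or> \<psi> s = -1"
      using \<chi> \<psi> unfolding characters_def by auto
    then show "(if E 0 s then \<chi> s + \<psi> s else 0) \<le> (1 + \<chi> s) * (1 + \<psi> s) / 2" by auto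
  qed
  also have "\<dots> = (\<Sum>s<n. 1 + \<chi> s + \<psi> s + \<chi> s * \<psi> s) / 2"
    by (simp add: sum_divide_distrib algebra_simps)
  also have "\<dots> = ((\<Sum>s<n. 1) + (\<Sum>s<n. \<chi> s) + (\<Sum>s<n. \<psi> s) + (\<Sum>s<n. \<chi> s * \<psi> s)) / 2"
    by (simp only: sum.distrib)
  also have "\<dots> = n / 2"
    using sum_character[OF \<chi>] sum_character[OF \<psi>] characters_orthogonal[OF \<chi> \<psi>] assms(3-5) by simp
  finally show ?thesis .
qed

lemma adj_eigenvalues_desc_eq:
  fixes cs :: "(nat \<Rightarrow> real) list"
  assumes cs: "distinct cs" "set cs \<subseteq> characters {..<n}" "length cs = n"
  shows "adj_eigenvalues_desc n E = rev (sort (map character_eigenvalue cs))"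
proof -
  have "proots (char_poly (adjacency_matrix n E)) = mset (map character_eigenvalue cs)"
    by (simp only: char_poly_adjacency_matrix[OF cs] proots_prod_linear)
  then show ?thesis by (simp add: adj_eigenvalues_desc_def del: mset_map)
qed

lemma adj_lambda_3_le:
  assumes "3 \<le> n"
  shows "adj_lambda 3 n E \<le> n / 4"
proof -
  obtain C where C: "finite C" "C \<subseteq> characters {..<n}" "card C = n"
    using characters_exist by blast
  obtain cs where cs: "set cs = C" "distinct cs" using finite_distinct_list[OF C(1)] by blast
  have len: "length cs = n" using cs C(3) distinct_card by fastforce
  define t where "t = adj_lambda 3 n E"
  have "t = rev (sort (map character_eigenvalue cs)) ! 2"
    using adj_eigenvalues_desc_eq[OF cs(2) _ len] cs(1) C(2) by (simp add: t_def adj_lambda_def)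
  then have "3 \<le> length (filter (\<lambda>v. t \<le> v) (map character_eigenvalue cs))"
    using length_filter_ge_nth_rev_sort[of 2 "map character_eigenvalue cs"] len assms by simp
  also have "\<dots> = card {\<chi> \<in> C. t \<le> character_eigenvalue \<chi>}"
    using distinct_card[OF distinct_filter[OF cs(2)]] cs(1)
    by (simp add: filter_map comp_def set_filter)
  finally have "2 \<le> card ({\<chi> \<in> C. t \<le> character_eigenvalue \<chi>} - {trivial_character})"
    using diff_card_le_card_Diff[of "{trivial_character}" "{\<chi> \<in> C. t \<le> character_eigenvalue \<chi>}"]
    by simp
  then obtain T where T: "T \<subseteq> {\<chi> \<in> C. t \<le> character_eigenvalue \<chi>} - {trivial_character}" "card T = 2"
    by (meson obtain_subset_with_card_n)
  then obtain \<chi> \<psi> where "T = {\<chi>, \<psi>}" "\<chi> \<noteq> \<psi>" by (auto simp: card_2_iff)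
  with T(1) have "\<chi> \<in> C" "\<psi> \<in> C" "\<chi> \<noteq> \<psi>" "\<chi> \<noteq> trivial_character" "\<psi> \<noteq> trivial_character"
    "t \<le> character_eigenvalue \<chi>" "t \<le> character_eigenvalue \<psi>" by auto
  with C(2) have "2 * t \<le> n / 2" using character_eigenvalue_add_le[of \<chi> \<psi>] by fastforce
  then show ?thesis by (simp add: t_def)
qed

end

locale abelian_vertex_transitive_graph =
  fixes n :: nat and E :: "nat \<Rightarrow> nat \<Rightarrow> bool"
  assumes simple: "simple_graph n E" and nonempty: "0 < n"
    and transitive: "vertex_transitive n E" and abelian: "abelian_automorphism_group n E"
begin

abbreviation Aut :: "(nat \<Rightarrow> nat) set" where
  "Aut \<equiv> graph_automorphisms n E"

lemma automorphismD:
  assumes "\<sigma> \<in> Aut"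
  shows "\<sigma> permutes {..<n}" and "x < n \<Longrightarrow> \<sigma> x < n"
    and "x < n \<Longrightarrow> y < n \<Longrightarrow> E (\<sigma> x) (\<sigma> y) \<longleftrightarrow> E x y"
  using assms permutes_in_image[of \<sigma> "{..<n}"] unfolding graph_automorphisms_def by auto

lemma automorphism_comp:
  assumes \<sigma>: "\<sigma> \<in> Aut" and \<tau>: "\<tau> \<in> Aut"
  shows "\<sigma> \<circ> \<tau> \<in> Aut"
proof -
  have "\<sigma> \<circ> \<tau> permutes {..<n}"
    by (rule permutes_compose[OF automorphismD(1)[OF \<tau>] automorphismD(1)[OF \<sigma>]])
  moreover have "E ((\<sigma> \<circ> \<tau>) x) ((\<sigma> \<circ> \<tau>) y) \<longleftrightarrow> E x y" if "x < n" "y < n" for x y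
    using that by (simp add: automorphismD(2,3)[OF \<tau>] automorphismD(2,3)[OF \<sigma>])
  ultimately show ?thesis unfolding graph_automorphisms_def by blast
qed

lemma automorphism_id: "id \<in> Aut"
  unfolding graph_automorphisms_def by (auto intro: permutes_id)

lemma automorphism_inv:
  assumes "\<sigma> \<in> Aut"
  shows "Hilbert_Choice.inv \<sigma> \<in> Aut"
proof -
  have perm: "\<sigma> permutes {..<n}" using automorphismD(1)[OF assms] .
  have inv: "Hilbert_Choice.inv \<sigma> permutes {..<n}" using permutes_inv[OF perm] .
  have "E (Hilbert_Choice.inv \<sigma> x) (Hilbert_Choice.inv \<sigma> y) \<longleftrightarrow> E x y" if "x < n" "y < n" for x y
  proof -
    have "Hilbert_Choice.inv \<sigma> x < n" "Hilbert_Choice.inv \<sigma> y < n"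
      using permutes_in_image[OF inv] that by auto
    from automorphismD(3)[OF assms this] show ?thesis
      by (simp add: permutes_inverses(1)[OF perm])
  qed
  with inv show ?thesis unfolding graph_automorphisms_def by blast
qed

lemma automorphisms_commute: "\<sigma> \<in> Aut \<Longrightarrow> \<tau> \<in> Aut \<Longrightarrow> \<sigma> \<circ> \<tau> = \<tau> \<circ> \<sigma>"
  using abelian unfolding abelian_automorphism_group_def by blast

(* Regularity: if \<rho> maps 0 to x, then \<sigma> x = \<rho> (\<sigma> 0) by commutativity. *)
lemma automorphism_eqI:
  assumes \<sigma>: "\<sigma> \<in> Aut" and \<tau>: "\<tau> \<in> Aut" and "\<sigma> 0 = \<tau> 0"
  shows "\<sigma> = \<tau>"
proof
  fix x
  show "\<sigma> x = \<tau> x"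
  proof (cases "x < n")
    case True
    then obtain \<rho> where \<rho>: "\<rho> \<in> Aut" "\<rho> 0 = x"
      using transitive nonempty unfolding vertex_transitive_def by blast
    have "\<sigma> x = \<rho> (\<sigma> 0)" using automorphisms_commute[OF \<sigma> \<rho>(1)] \<rho>(2) by (metis comp_apply)
    also have "\<dots> = \<tau> x" using automorphisms_commute[OF \<tau> \<rho>(1)] \<rho>(2) assms(3) by (metis comp_apply)
    finally show ?thesis .
  next
    case False
    then show ?thesis
      using permutes_not_in[OF automorphismD(1)[OF \<sigma>]] permutes_not_in[OF automorphismD(1)[OF \<tau>]]
      by simp
  qed
qed

(* Vertex x is identified with the unique automorphism mapping 0 to x; the resulting group law
   on the vertices is x + y = translation x y. *)
definition translation :: "nat \<Rightarrow> nat \<Rightarrow> nat" where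
  "translation x = (SOME \<sigma>. \<sigma> \<in> Aut \<and> \<sigma> 0 = x)"

lemma translation:
  assumes "x < n"
  shows "translation x \<in> Aut" and "translation x 0 = x"
proof -
  have "\<exists>\<sigma>. \<sigma> \<in> Aut \<and> \<sigma> 0 = x" using transitive assms nonempty unfolding vertex_transitive_def by blast
  from someI_ex[OF this] show "translation x \<in> Aut" "translation x 0 = x"
    unfolding translation_def by auto
qed

lemma translation_eq: "\<sigma> \<in> Aut \<Longrightarrow> translation (\<sigma> 0) = \<sigma>"
  using automorphism_eqI translation automorphismD(2) nonempty by metis

definition inversion :: "nat \<Rightarrow> nat" where
  "inversion x = (if x < n then Hilbert_Choice.inv (translation x) 0 else x)"

lemma inversion_less:
  assumes "x < n"
  shows "inversion x < n"
  using automorphismD(2)[OF automorphism_inv[OF translation(1)[OF assms]] nonempty] assms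
  by (simp add: inversion_def)

lemma translation_inversion: "x < n \<Longrightarrow> translation x (inversion x) = 0"
  unfolding inversion_def using permutes_inverses(1)[OF automorphismD(1)[OF translation(1)]] by simp

lemma inversion_inversion: "inversion (inversion x) = x"
proof (cases "x < n")
  case True
  have "translation (inversion x) = Hilbert_Choice.inv (translation x)"
    using translation_eq[OF automorphism_inv[OF translation(1)[OF True]]] True
    by (simp add: inversion_def)
  then have "inversion (inversion x) = translation x 0"
    using inversion_less[OF True] permutes_inv_inv[OF automorphismD(1)[OF translation(1)[OF True]]]
    by (simp add: inversion_def)
  then show ?thesis using translation(2)[OF True] by simp
qed (simp add: inversion_def)

(* Composing with translation x \<circ> translation y swaps inversion x and inversion y into y and x,
   so inversion is an automorphism because E is symmetric. *)
lemma inversion_automorphism: "inversion \<in> Aut"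
proof -
  have "inversion permutes {..<n}"
  proof (rule inj_imp_permutes)
    show "inj_on inversion {..<n}" by (metis inj_onI inversion_inversion)
    show "x \<in> {..<n} \<Longrightarrow> inversion x \<in> {..<n}" for x using inversion_less by simp
    show "x \<notin> {..<n} \<Longrightarrow> inversion x = x" for x by (simp add: inversion_def)
  qed simp
  moreover have "E (inversion x) (inversion y) \<longleftrightarrow> E x y" if xy: "x < n" "y < n" for x y
  proof -
    let ?s = "translation x" and ?t = "translation y"
    have s: "?s \<in> Aut" and t: "?t \<in> Aut" using translation(1) xy by auto
    have "(?s \<circ> ?t) (inversion x) = y"
      using automorphisms_commute[OF s t] translation_inversion[OF xy(1)] translation(2)[OF xy(2)]
      by (metis comp_apply)
    moreover have "(?s \<circ> ?t) (inversion y) = x"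
      using translation_inversion[OF xy(2)] translation(2)[OF xy(1)] by simp
    ultimately have "E (inversion x) (inversion y) \<longleftrightarrow> E y x"
      using automorphismD(3)[OF automorphism_comp[OF s t] inversion_less inversion_less] xy by metis
    then show ?thesis using simple xy unfolding simple_graph_def by blast
  qed
  ultimately show ?thesis unfolding graph_automorphisms_def by auto
qed

(* inversion commutes with \<sigma> and fixes 0, so inv \<sigma> 0 = inversion (\<sigma> 0) = \<sigma> 0. *)
lemma automorphism_involution:
  assumes "\<sigma> \<in> Aut"
  shows "\<sigma> (\<sigma> x) = x"
proof -
  have "inversion 0 = 0" using translation_inversion[OF nonempty] translation_eq[OF automorphism_id]
    by simp
  then have "inversion (\<sigma> 0) = \<sigma> 0"
    using automorphisms_commute[OF inversion_automorphism assms] by (metis comp_apply)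
  then have "Hilbert_Choice.inv \<sigma> 0 = \<sigma> 0"
    using translation_eq[OF assms] automorphismD(2)[OF assms nonempty] by (simp add: inversion_def)
  then have "Hilbert_Choice.inv \<sigma> = \<sigma>" using automorphism_eqI[OF automorphism_inv[OF assms] assms] by simp
  then show ?thesis using permutes_inverses(1)[OF automorphismD(1)[OF assms]] by metis
qed

lemma translation_translation:
  "x < n \<Longrightarrow> y < n \<Longrightarrow> translation (translation x y) = translation x \<circ> translation y"
  using translation_eq[OF automorphism_comp[OF translation(1) translation(1)]] translation(2) by simp

sublocale boolean_cayley_graph n translation E
proof
  fix x y z assume x: "x < n" and y: "y < n" and z: "z < n"
  show "translation x y < n" using automorphismD(2)[OF translation(1)[OF x] y] .
  show "translation 0 y = y" using translation_eq[OF automorphism_id] by simp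
  show "translation x x = 0"
    using automorphism_involution[OF translation(1)[OF x], of 0] translation(2)[OF x] by simp
  show "translation x y = translation y x"
    using automorphisms_commute[OF translation(1)[OF x] translation(1)[OF y]] translation(2) x y
    by (metis comp_apply)
  show "translation (translation x y) z = translation x (translation y z)"
    using translation_translation[OF x y] by simp
  show "E x y = E 0 (translation x y)"
    using automorphismD(3)[OF translation(1)[OF x] x y] translation(2)[OF x]
      automorphism_involution[OF translation(1)[OF x], of 0] by simp
qed (rule nonempty)

end

theorem corollary3p12:
  fixes n :: nat and E :: "nat \<Rightarrow> nat \<Rightarrow> bool"
  assumes "simple_graph n E"
    and "n \<ge> 3"
    and "vertex_transitive n E"
    and "abelian_automorphism_group n E"
  shows "adj_lambda 3 n E / real n \<le> 1 / 3"
proof -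
  interpret abelian_vertex_transitive_graph n E
    using assms by unfold_locales auto
  have "adj_lambda 3 n E \<le> n / 4" using assms(2) by (rule adj_lambda_3_le)
  then show ?thesis using assms(2) by (simp add: field_simps)
qed

end
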